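(* Let $n$ be odd. Let $\theta\sim\mathsf{Bernoulli}(p)$ with $p\in[\frac12,1)$ and, conditionally on $\theta$, let $Y_1,\dots,Y_n$ be i.i.d. with $\Pr(Y_k=1|\theta=1)=\bar\alpha$ and $\Pr(Y_k=1|\theta=0)=\alpha$, where $\alpha\in(0,\frac12)$, $\bar\alpha\bar p>\alpha p$, and $p<\mathsf{P}_{\mathsf{c}}(\theta|Y^n)$. Let $$\zeta_n(\varepsilon)=\frac{\mathsf{P}_{\mathsf{c}}(\theta|Y^n)-\varepsilon^n}{p\bar\alpha^n-\bar p\alpha^n}.$$ Then there exists $\varepsilon_{\mathsf L}<\mathsf{P}_{\mathsf{c}}^{1/n}(\theta|Y^n)$ such that for every $\varepsilon\in[\varepsilon_{\mathsf L},\mathsf{P}_{\mathsf{c}}^{1/n}(\theta|Y^n)]$, $$\max_{P_{Z^n|Y^n}:\ \mathcal{Z}^n=\{0,1\}^n,\ \mathsf{P}_{\mathsf{c}}(\theta|Z^n)\le\varepsilon^n}\mathsf{P}_{\mathsf{c}}(Y^n|Z^n)=1-\zeta_n(\varepsilon)\,(p\bar\alpha^n+\bar p\alpha^n),$$ and the $2^n$-ary Z-channel $\mathsf{Z}_n(\zeta_n(\varepsilon))$ attains this maximum on this interval.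
   Context: $\bar a=1-a$. $\mathsf{P}_{\mathsf{c}}(\theta|Z^n)=\sum_{z^n}\max_{t}P_{\theta Z^n}(t,z^n)$, and similarly for $\mathsf{P}_{\mathsf{c}}(Y^n|Z^n)$, $\mathsf{P}_{\mathsf{c}}(\theta|Y^n)$. The maximum is over channels $P_{Z^n|Y^n}$ with output alphabet $\{0,1\}^n$ acting on $Y^n$ only (so $\theta - Y^n - Z^n$ is a Markov chain). The $2^n$-ary Z-channel $\mathsf{Z}_n(\gamma)$ on $\{0,1\}^n$ is given by $\mathsf{W}(y|y)=1$ for $y\ne\mathbf 1$, $\mathsf{W}(\mathbf 0|\mathbf 1)=\gamma$, $\mathsf{W}(\mathbf 1|\mathbf 1)=1-\gamma$, with $\mathbf 0=(0,\dots,0)$, $\mathbf 1=(1,\dots,1)$. *)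

theory Defs
  imports Complex_Main
begin

text \<open>Binary strings of length n, i.e. the alphabet {0,1}^n (True = 1, False = 0).\<close>
definition cube :: "nat \<Rightarrow> bool list set" where
  "cube n = {ys. length ys = n}"

text \<open>Joint pmf P_{theta Y^n}(t, y): theta ~ Bernoulli(p), Y_k i.i.d. given theta,
  P(Y_k = 1 | theta = 1) = 1 - alpha, P(Y_k = 1 | theta = 0) = alpha.\<close>
definition jointP :: "real \<Rightarrow> real \<Rightarrow> nat \<Rightarrow> bool \<Rightarrow> bool list \<Rightarrow> real" where
  "jointP p \<alpha> n t y =
     (if t then p else 1 - p) * (\<Prod>i<n. if y ! i = t then 1 - \<alpha> else \<alpha>)"

definition PY :: "real \<Rightarrow> real \<Rightarrow> nat \<Rightarrow> bool list \<Rightarrow> real" where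
  "PY p \<alpha> n y = jointP p \<alpha> n True y + jointP p \<alpha> n False y"

text \<open>A channel P_{Z^n|Y^n} with input and output alphabet {0,1}^n; W y z = P(z | y).\<close>
definition is_channel :: "nat \<Rightarrow> (bool list \<Rightarrow> bool list \<Rightarrow> real) \<Rightarrow> bool" where
  "is_channel n W \<longleftrightarrow>
     (\<forall>y\<in>cube n. \<forall>z\<in>cube n. 0 \<le> W y z) \<and> (\<forall>y\<in>cube n. (\<Sum>z\<in>cube n. W y z) = 1)"

definition Pc_theta_Y :: "real \<Rightarrow> real \<Rightarrow> nat \<Rightarrow> real" where
  "Pc_theta_Y p \<alpha> n = (\<Sum>y\<in>cube n. max (jointP p \<alpha> n True y) (jointP p \<alpha> n False y))"

text \<open>P_c(theta | Z^n) for Z^n the output of W on Y^n (Markov chain theta - Y^n - Z^n).\<close>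
definition Pc_theta_Z :: "real \<Rightarrow> real \<Rightarrow> nat \<Rightarrow> (bool list \<Rightarrow> bool list \<Rightarrow> real) \<Rightarrow> real" where
  "Pc_theta_Z p \<alpha> n W = (\<Sum>z\<in>cube n.
      max (\<Sum>y\<in>cube n. jointP p \<alpha> n True y * W y z)
          (\<Sum>y\<in>cube n. jointP p \<alpha> n False y * W y z))"

definition Pc_Y_Z :: "real \<Rightarrow> real \<Rightarrow> nat \<Rightarrow> (bool list \<Rightarrow> bool list \<Rightarrow> real) \<Rightarrow> real" where
  "Pc_Y_Z p \<alpha> n W = (\<Sum>z\<in>cube n. Max ((\<lambda>y. PY p \<alpha> n y * W y z) ` cube n))"

definition Zchan :: "nat \<Rightarrow> real \<Rightarrow> bool list \<Rightarrow> bool list \<Rightarrow> real" where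
  "Zchan n \<gamma> y z =
     (if y = replicate n True then
        (if z = replicate n False then \<gamma> else if z = replicate n True then 1 - \<gamma> else 0)
      else (if z = y then 1 else 0))"

definition zeta :: "real \<Rightarrow> real \<Rightarrow> nat \<Rightarrow> real \<Rightarrow> real" where
  "zeta p \<alpha> n \<epsilon> = (Pc_theta_Y p \<alpha> n - \<epsilon> ^ n) / (p * (1 - \<alpha>) ^ n - (1 - p) * \<alpha> ^ n)"

end

theory Submission
  imports Defs
begin

text \<open>Write \<open>A y\<close>, \<open>B y\<close> for the joint probabilities of \<open>\<theta> = 1\<close>, \<open>\<theta> = 0\<close> and
  \<open>Y\<^sup>n = y\<close>. The normalised advantage \<open>\<bar>A y - B y\<bar> / (A y + B y)\<close> is largest at the
  all-ones string, where it equals \<open>c / Q\<close> with \<open>c = p (1 - \<alpha>)\<^sup>n - (1 - p) \<alpha>\<^sup>n\<close> and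
  \<open>Q = p (1 - \<alpha>)\<^sup>n + (1 - p) \<alpha>\<^sup>n\<close>. Given a channel, in each output column only the input with
  the largest joint mass can be guessed without loss, and every other input loses at most
  \<open>c / Q\<close> times its mass; summing over the outputs gives
  \<open>Q (P\<^sub>c(\<theta>|Y\<^sup>n) - P\<^sub>c(\<theta>|Z\<^sup>n)) \<le> c (1 - P\<^sub>c(Y\<^sup>n|Z\<^sup>n))\<close>, the converse.
  The Z-channel moves a fraction \<open>\<gamma>\<close> of the all-ones string to the all-zeros string and meets
  this bound with equality as long as \<open>\<gamma>\<close> is small enough not to change the MAP decisions at
  the all-zeros output; \<open>\<gamma> = \<zeta>\<^sub>n(\<epsilon>)\<close> is small for \<open>\<epsilon>\<^sup>n\<close> close to \<open>P\<^sub>c(\<theta>|Y\<^sup>n)\<close>.\<close>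

lemma cube_0: "cube 0 = {[]}"
  unfolding cube_def by auto

lemma cube_Suc: "cube (Suc n) = Cons True ` cube n \<union> Cons False ` cube n"
  unfolding cube_def by (force simp: length_Suc_conv)

lemma finite_cube: "finite (cube n)"
  by (induction n) (auto simp: cube_Suc cube_0)

lemma replicate_in_cube: "replicate n b \<in> cube n"
  unfolding cube_def by simp

lemma replicate_True_neq_False: "0 < n \<Longrightarrow> replicate n True \<noteq> replicate n False"
  by (cases n) auto

lemma sum_cube_prod:
  fixes g :: "nat \<Rightarrow> bool \<Rightarrow> real"
  shows "(\<Sum>y\<in>cube n. \<Prod>i<n. g i (y ! i)) = (\<Prod>i<n. g i True + g i False)"
proof (induction n arbitrary: g)
  case 0
  then show ?case by (simp add: cube_0)
next
  case (Suc n)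
  have Cons_part: "(\<Sum>y\<in>Cons b ` cube n. \<Prod>i<Suc n. g i (y ! i))
      = g 0 b * (\<Prod>i<n. g (Suc i) True + g (Suc i) False)" for b
  proof -
    have "(\<Sum>y\<in>Cons b ` cube n. \<Prod>i<Suc n. g i (y ! i))
        = (\<Sum>ys\<in>cube n. g 0 b * (\<Prod>i<n. g (Suc i) (ys ! i)))"
      by (subst sum.reindex) (auto simp: inj_on_def prod.lessThan_Suc_shift simp del: prod.lessThan_Suc)
    also have "\<dots> = g 0 b * (\<Prod>i<n. g (Suc i) True + g (Suc i) False)"
      using Suc.IH[of "\<lambda>i. g (Suc i)"] by (simp add: sum_distrib_left[symmetric])
    finally show ?thesis .
  qed
  have "(\<Sum>y\<in>cube (Suc n). \<Prod>i<Suc n. g i (y ! i))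
      = (\<Sum>y\<in>Cons True ` cube n. \<Prod>i<Suc n. g i (y ! i))
        + (\<Sum>y\<in>Cons False ` cube n. \<Prod>i<Suc n. g i (y ! i))"
    unfolding cube_Suc by (rule sum.union_disjoint) (auto simp: finite_cube)
  also have "\<dots> = (\<Prod>i<Suc n. g i True + g i False)"
    unfolding Cons_part by (simp only: prod.lessThan_Suc_shift) (simp add: algebra_simps)
  finally show ?case .
qed

lemma sum_jointP: "(\<Sum>y\<in>cube n. jointP p \<alpha> n t y) = (if t then p else 1 - p)"
proof -
  have "(\<Sum>y\<in>cube n. jointP p \<alpha> n t y)
      = (if t then p else 1 - p) * (\<Sum>y\<in>cube n. \<Prod>i<n. (\<lambda>i b. if b = t then 1 - \<alpha> else \<alpha>) i (y ! i))"
    unfolding jointP_def by (simp add: sum_distrib_left)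
  also have "\<dots> = (if t then p else 1 - p)"
    by (subst sum_cube_prod) auto
  finally show ?thesis .
qed

lemma sum_PY: "(\<Sum>y\<in>cube n. PY p \<alpha> n y) = 1"
  unfolding PY_def by (simp add: sum.distrib sum_jointP)

lemma jointP_nonneg: "0 \<le> p \<Longrightarrow> p \<le> 1 \<Longrightarrow> 0 \<le> \<alpha> \<Longrightarrow> \<alpha> \<le> 1 \<Longrightarrow> 0 \<le> jointP p \<alpha> n t y"
  unfolding jointP_def by (intro mult_nonneg_nonneg prod_nonneg) auto

lemma jointP_replicate:
  "jointP p \<alpha> n t (replicate n b) = (if t then p else 1 - p) * (if b = t then 1 - \<alpha> else \<alpha>) ^ n"
  unfolding jointP_def by simp

lemma mult_power_less:
  fixes a b q r :: real
  assumes "0 \<le> a" "a \<le> b" "0 \<le> q" "a * q < b * r" "0 < n"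
  shows "q * a ^ n < r * b ^ n"
proof -
  obtain m where n: "n = Suc m" using assms(5) by (cases n) auto
  have "b > 0" using assms by (cases "b = 0") auto
  have "q * a ^ n = (a * q) * a ^ m" unfolding n by simp
  also have "\<dots> \<le> (a * q) * b ^ m" using assms by (intro mult_left_mono power_mono) auto
  also have "\<dots> < (b * r) * b ^ m" using assms \<open>b > 0\<close> by (intro mult_strict_right_mono) auto
  also have "\<dots> = r * b ^ n" unfolding n by simp
  finally show ?thesis .
qed

lemma abs_diff_mult_le:
  fixes A B A1 B1 :: real
  shows "A * B1 \<le> A1 * B \<Longrightarrow> B * B1 \<le> A * A1 \<Longrightarrow> \<bar>A - B\<bar> * (A1 + B1) \<le> (A1 - B1) * (A + B)"
  by (cases "A \<ge> B") (auto simp: algebra_simps)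

lemma jointP_advantage_le:
  assumes "0 \<le> \<alpha>" "\<alpha> \<le> 1/2" "1/2 \<le> p" "p \<le> 1"
  shows "\<bar>jointP p \<alpha> n True y - jointP p \<alpha> n False y\<bar> * (p * (1 - \<alpha>) ^ n + (1 - p) * \<alpha> ^ n)
     \<le> (p * (1 - \<alpha>) ^ n - (1 - p) * \<alpha> ^ n) * (jointP p \<alpha> n True y + jointP p \<alpha> n False y)"
proof (rule abs_diff_mult_le)
  have \<alpha>\<alpha>: "\<alpha> * \<alpha> \<le> (1 - \<alpha>) * (1 - \<alpha>)" by (rule mult_mono) (use assms in auto)
  have pp: "(1 - p) * (1 - p) \<le> p * p" by (rule mult_mono) (use assms in auto)
  have "jointP p \<alpha> n True y * ((1 - p) * \<alpha> ^ n)
      = p * (1 - p) * (\<Prod>i<n. (if y ! i then 1 - \<alpha> else \<alpha>) * \<alpha>)"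
    unfolding jointP_def by (simp add: prod.distrib)
  also have "\<dots> \<le> p * (1 - p) * (\<Prod>i<n. (1 - \<alpha>) * (if \<not> y ! i then 1 - \<alpha> else \<alpha>))"
    using assms \<alpha>\<alpha> by (intro mult_left_mono prod_mono) auto
  also have "\<dots> = p * (1 - \<alpha>) ^ n * jointP p \<alpha> n False y"
    unfolding jointP_def by (simp add: prod.distrib)
  finally show "jointP p \<alpha> n True y * ((1 - p) * \<alpha> ^ n) \<le> p * (1 - \<alpha>) ^ n * jointP p \<alpha> n False y" .
  have "jointP p \<alpha> n False y * ((1 - p) * \<alpha> ^ n)
      = (1 - p) * (1 - p) * (\<Prod>i<n. (if \<not> y ! i then 1 - \<alpha> else \<alpha>) * \<alpha>)"
    unfolding jointP_def by (simp add: prod.distrib)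
  also have "\<dots> \<le> p * p * (\<Prod>i<n. (if y ! i then 1 - \<alpha> else \<alpha>) * (1 - \<alpha>))"
    using assms \<alpha>\<alpha> pp by (intro mult_mono prod_mono prod_nonneg) auto
  also have "\<dots> = jointP p \<alpha> n True y * (p * (1 - \<alpha>) ^ n)"
    unfolding jointP_def by (simp add: prod.distrib)
  finally show "jointP p \<alpha> n False y * ((1 - p) * \<alpha> ^ n) \<le> jointP p \<alpha> n True y * (p * (1 - \<alpha>) ^ n)" .
qed

text \<open>Decide as the maximiser of \<open>(A + B) * W\<close> would: its term loses nothing, every other
  term at most \<open>L * (A + B) * W\<close>.\<close>
lemma sum_max_minus_max_sum_le:
  fixes A B W :: "'a \<Rightarrow> real" and L :: real
  assumes "finite S" "S \<noteq> {}"
    and W_nonneg: "\<And>y. y \<in> S \<Longrightarrow> 0 \<le> W y"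
    and advantage: "\<And>y. y \<in> S \<Longrightarrow> \<bar>A y - B y\<bar> \<le> L * (A y + B y)"
  shows "(\<Sum>y\<in>S. max (A y) (B y) * W y) - max (\<Sum>y\<in>S. A y * W y) (\<Sum>y\<in>S. B y * W y)
     \<le> L * ((\<Sum>y\<in>S. (A y + B y) * W y) - Max ((\<lambda>y. (A y + B y) * W y) ` S))"
proof -
  obtain y0 where y0: "y0 \<in> S" "Max ((\<lambda>y. (A y + B y) * W y) ` S) = (A y0 + B y0) * W y0"
  proof -
    have "Max ((\<lambda>y. (A y + B y) * W y) ` S) \<in> (\<lambda>y. (A y + B y) * W y) ` S"
      using assms(1,2) by (intro Max_in) auto
    then show ?thesis using that by fastforce
  qed
  define C where "C = (if B y0 \<le> A y0 then A else B)"
  have "(\<Sum>y\<in>S. C y * W y) \<le> max (\<Sum>y\<in>S. A y * W y) (\<Sum>y\<in>S. B y * W y)"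
    by (simp add: C_def)
  moreover have "(\<Sum>y\<in>S. max (A y) (B y) * W y) - (\<Sum>y\<in>S. C y * W y)
      = (\<Sum>y\<in>S - {y0}. (max (A y) (B y) - C y) * W y)"
    using assms(1) y0(1) by (simp add: sum_subtractf[symmetric] left_diff_distrib sum.remove C_def)
  moreover have "\<dots> \<le> (\<Sum>y\<in>S - {y0}. L * ((A y + B y) * W y))"
  proof (rule sum_mono)
    fix y assume y: "y \<in> S - {y0}"
    have "max (A y) (B y) - C y \<le> \<bar>A y - B y\<bar>"
      by (auto simp: C_def max_def)
    then have "max (A y) (B y) - C y \<le> L * (A y + B y)"
      using advantage[of y] y by fastforce
    then show "(max (A y) (B y) - C y) * W y \<le> L * ((A y + B y) * W y)"
      using W_nonneg[of y] y by (simp add: mult_right_mono mult.assoc[symmetric])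
  qed
  moreover have "\<dots> = L * ((\<Sum>y\<in>S. (A y + B y) * W y) - Max ((\<lambda>y. (A y + B y) * W y) ` S))"
    using assms(1) y0 by (simp add: sum.remove sum_distrib_left)
  ultimately show ?thesis by linarith
qed

lemma Pc_theta_Y_minus_Pc_theta_Z_le:
  assumes "0 \<le> \<alpha>" "\<alpha> \<le> 1/2" "1/2 \<le> p" "p \<le> 1" and W: "is_channel n W"
  shows "(Pc_theta_Y p \<alpha> n - Pc_theta_Z p \<alpha> n W) * (p * (1 - \<alpha>) ^ n + (1 - p) * \<alpha> ^ n)
     \<le> (p * (1 - \<alpha>) ^ n - (1 - p) * \<alpha> ^ n) * (1 - Pc_Y_Z p \<alpha> n W)"
proof -
  define Q where "Q = p * (1 - \<alpha>) ^ n + (1 - p) * \<alpha> ^ n"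
  define L where "L = (p * (1 - \<alpha>) ^ n - (1 - p) * \<alpha> ^ n) / Q"
  define A where "A = jointP p \<alpha> n True"
  define B where "B = jointP p \<alpha> n False"
  have "Q > 0"
    unfolding Q_def using assms by (intro add_pos_nonneg mult_pos_pos) auto
  have advantage: "\<bar>A y - B y\<bar> \<le> L * (A y + B y)" for y
    using jointP_advantage_le[OF assms(1-4), of n y] \<open>Q > 0\<close>
    unfolding L_def A_def B_def Q_def by (simp add: pos_le_divide_eq)
  have W_nonneg: "\<And>y z. y \<in> cube n \<Longrightarrow> z \<in> cube n \<Longrightarrow> 0 \<le> W y z"
    and W_sum: "\<And>y. y \<in> cube n \<Longrightarrow> (\<Sum>z\<in>cube n. W y z) = 1"
    using W unfolding is_channel_def by auto
  have swap: "(\<Sum>y\<in>cube n. f y) = (\<Sum>z\<in>cube n. \<Sum>y\<in>cube n. f y * W y z)" for f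
  proof -
    have "(\<Sum>y\<in>cube n. f y) = (\<Sum>y\<in>cube n. \<Sum>z\<in>cube n. f y * W y z)"
      using W_sum by (simp add: sum_distrib_left[symmetric])
    also have "\<dots> = (\<Sum>z\<in>cube n. \<Sum>y\<in>cube n. f y * W y z)"
      by (rule sum.swap)
    finally show ?thesis .
  qed
  have "Pc_theta_Y p \<alpha> n - Pc_theta_Z p \<alpha> n W = (\<Sum>z\<in>cube n.
      (\<Sum>y\<in>cube n. max (A y) (B y) * W y z) - max (\<Sum>y\<in>cube n. A y * W y z) (\<Sum>y\<in>cube n. B y * W y z))"
    unfolding Pc_theta_Y_def Pc_theta_Z_def A_def B_def
    by (subst swap) (simp add: sum_subtractf)
  also have "\<dots> \<le> (\<Sum>z\<in>cube n. L * ((\<Sum>y\<in>cube n. (A y + B y) * W y z)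
      - Max ((\<lambda>y. (A y + B y) * W y z) ` cube n)))"
    using replicate_in_cube by (intro sum_mono sum_max_minus_max_sum_le) (auto simp: finite_cube W_nonneg advantage)
  also have "\<dots> = L * (1 - Pc_Y_Z p \<alpha> n W)"
    using sum_PY[of p \<alpha> n] swap[of "PY p \<alpha> n"]
    unfolding Pc_Y_Z_def PY_def A_def B_def by (simp add: sum_distrib_left[symmetric] sum_subtractf)
  finally show ?thesis
    using \<open>Q > 0\<close> unfolding L_def Q_def[symmetric] by (simp add: field_simps)
qed

lemma Pc_Y_Z_le_if_Pc_theta_Z_le:
  assumes "0 \<le> \<alpha>" "\<alpha> \<le> 1/2" "1/2 \<le> p" "p \<le> 1"
    and gap: "(1 - p) * \<alpha> ^ n < p * (1 - \<alpha>) ^ n"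
    and W: "is_channel n W" "Pc_theta_Z p \<alpha> n W \<le> \<epsilon> ^ n"
  shows "Pc_Y_Z p \<alpha> n W \<le> 1 - zeta p \<alpha> n \<epsilon> * (p * (1 - \<alpha>) ^ n + (1 - p) * \<alpha> ^ n)"
proof -
  define c where "c = p * (1 - \<alpha>) ^ n - (1 - p) * \<alpha> ^ n"
  define Q where "Q = p * (1 - \<alpha>) ^ n + (1 - p) * \<alpha> ^ n"
  have "c > 0" using gap unfolding c_def by simp
  have "c * (zeta p \<alpha> n \<epsilon> * Q) = (Pc_theta_Y p \<alpha> n - \<epsilon> ^ n) * Q"
    using \<open>c > 0\<close> unfolding zeta_def c_def[symmetric] by simp
  also have "\<dots> \<le> (Pc_theta_Y p \<alpha> n - Pc_theta_Z p \<alpha> n W) * Q"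
    using W(2) assms(1-4) unfolding Q_def by (intro mult_right_mono add_nonneg_nonneg) auto
  also have "\<dots> \<le> c * (1 - Pc_Y_Z p \<alpha> n W)"
    using Pc_theta_Y_minus_Pc_theta_Z_le[OF assms(1-4) W(1)] unfolding c_def Q_def .
  finally have "zeta p \<alpha> n \<epsilon> * Q \<le> 1 - Pc_Y_Z p \<alpha> n W"
    using \<open>c > 0\<close> by (rule mult_left_le_imp_le)
  then show ?thesis unfolding Q_def by linarith
qed

lemma sum_remove_two:
  assumes "finite S" "a \<in> S" "b \<in> S" "a \<noteq> b"
  shows "sum f S = f a + f b + sum f (S - {a, b})"
proof -
  have "sum f S = f a + sum f (S - {a})" using assms by (simp add: sum.remove)
  also have "sum f (S - {a}) = f b + sum f (S - {a} - {b})" using assms by (simp add: sum.remove)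
  also have "S - {a} - {b} = S - {a, b}" by auto
  finally show ?thesis by (simp add: add.assoc)
qed

lemma sum_cube_remove_replicates:
  "0 < n \<Longrightarrow> sum f (cube n) = f (replicate n False) + f (replicate n True)
     + sum f (cube n - {replicate n False, replicate n True})"
  by (rule sum_remove_two) (auto simp: finite_cube replicate_in_cube replicate_True_neq_False[symmetric])

lemma is_channel_Zchan:
  assumes "0 < n" "0 \<le> \<gamma>" "\<gamma> \<le> 1"
  shows "is_channel n (Zchan n \<gamma>)"
  unfolding is_channel_def
proof (intro conjI ballI)
  fix y z
  show "0 \<le> Zchan n \<gamma> y z" using assms by (auto simp: Zchan_def)
next
  fix y assume y: "y \<in> cube n"
  show "(\<Sum>z\<in>cube n. Zchan n \<gamma> y z) = 1"
  proof (cases "y = replicate n True")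
    case True
    then show ?thesis
      using assms(1) replicate_True_neq_False[OF assms(1)]
      by (subst sum_cube_remove_replicates) (auto simp: Zchan_def intro!: sum.neutral)
  next
    case False
    then have "(\<Sum>z\<in>cube n. Zchan n \<gamma> y z) = (\<Sum>z\<in>cube n. if y = z then 1 else 0)"
      by (intro sum.cong) (auto simp: Zchan_def)
    then show ?thesis using y by (simp add: finite_cube)
  qed
qed

lemma sum_mult_Zchan:
  fixes f :: "bool list \<Rightarrow> real"
  assumes "z \<in> cube n"
  shows "(\<Sum>y\<in>cube n. f y * Zchan n \<gamma> y z) = f (replicate n True) * Zchan n \<gamma> (replicate n True) z
     + (if z = replicate n True then 0 else f z)"
proof -
  have "(\<Sum>y\<in>cube n. f y * Zchan n \<gamma> y z) = f (replicate n True) * Zchan n \<gamma> (replicate n True) z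
      + (\<Sum>y\<in>cube n - {replicate n True}. f y * Zchan n \<gamma> y z)"
    by (rule sum.remove[OF finite_cube replicate_in_cube])
  also have "(\<Sum>y\<in>cube n - {replicate n True}. f y * Zchan n \<gamma> y z)
      = (\<Sum>y\<in>cube n - {replicate n True}. if z = y then f y else 0)"
    by (rule sum.cong) (auto simp: Zchan_def)
  also have "\<dots> = (if z = replicate n True then 0 else f z)"
    using assms by (simp add: finite_cube)
  finally show ?thesis .
qed

text \<open>The hypothesis on \<open>\<gamma>\<close> keeps \<open>\<theta> = 0\<close> the MAP estimate at the all-zeros output.\<close>
lemma Pc_theta_Z_Zchan:
  assumes "0 \<le> \<alpha>" "\<alpha> \<le> 1/2" "1/2 \<le> p" "p \<le> 1" "0 < n" "0 \<le> \<gamma>" "\<gamma> \<le> 1"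
    and \<gamma>: "\<gamma> * (p * (1 - \<alpha>) ^ n - (1 - p) * \<alpha> ^ n) \<le> (1 - p) * (1 - \<alpha>) ^ n - p * \<alpha> ^ n"
  shows "Pc_theta_Z p \<alpha> n (Zchan n \<gamma>)
    = Pc_theta_Y p \<alpha> n - \<gamma> * (p * (1 - \<alpha>) ^ n - (1 - p) * \<alpha> ^ n)"
proof -
  define A where "A = jointP p \<alpha> n True"
  define B where "B = jointP p \<alpha> n False"
  define e0 where "e0 = replicate n False"
  define e1 where "e1 = replicate n True"
  have A_e1: "A e1 = p * (1 - \<alpha>) ^ n" and B_e1: "B e1 = (1 - p) * \<alpha> ^ n"
    and A_e0: "A e0 = p * \<alpha> ^ n" and B_e0: "B e0 = (1 - p) * (1 - \<alpha>) ^ n"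
    unfolding A_def B_def e0_def e1_def by (simp_all add: jointP_replicate)
  have "\<alpha> ^ n \<le> (1 - \<alpha>) ^ n" using assms by (intro power_mono) auto
  then have "B e1 \<le> A e1" unfolding A_e1 B_e1 using assms by (intro mult_mono) auto
  then have "0 \<le> \<gamma> * (A e1 - B e1)" using assms(6) by simp
  then have "A e0 \<le> B e0" using \<gamma> unfolding A_e1 B_e1 A_e0 B_e0 by linarith
  have "Pc_theta_Z p \<alpha> n (Zchan n \<gamma>) = (\<Sum>z\<in>cube n.
      max (A e1 * Zchan n \<gamma> e1 z + (if z = e1 then 0 else A z))
          (B e1 * Zchan n \<gamma> e1 z + (if z = e1 then 0 else B z)))"
    unfolding Pc_theta_Z_def A_def B_def e1_def by (intro sum.cong refl) (simp only: sum_mult_Zchan)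
  also have "\<dots> = max (A e1 * \<gamma> + A e0) (B e1 * \<gamma> + B e0) + max (A e1 * (1 - \<gamma>)) (B e1 * (1 - \<gamma>))
      + (\<Sum>y\<in>cube n - {e0, e1}. max (A y) (B y))"
    using replicate_True_neq_False[OF assms(5)] unfolding e0_def e1_def
    by (subst sum_cube_remove_replicates[OF assms(5)]) (auto simp: Zchan_def intro!: sum.cong)
  also have "max (A e1 * \<gamma> + A e0) (B e1 * \<gamma> + B e0) = B e1 * \<gamma> + B e0"
    using \<gamma> unfolding A_e1 B_e1 A_e0 B_e0 by (simp add: algebra_simps)
  also have "max (A e1 * (1 - \<gamma>)) (B e1 * (1 - \<gamma>)) = A e1 * (1 - \<gamma>)"
    using \<open>B e1 \<le> A e1\<close> assms(7) by (simp add: mult_right_mono)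
  also have "(\<Sum>y\<in>cube n - {e0, e1}. max (A y) (B y))
      = Pc_theta_Y p \<alpha> n - max (A e0) (B e0) - max (A e1) (B e1)"
    unfolding Pc_theta_Y_def A_def B_def e0_def e1_def by (simp add: sum_cube_remove_replicates[OF assms(5)])
  finally show ?thesis
    using \<open>B e1 \<le> A e1\<close> \<open>A e0 \<le> B e0\<close> unfolding A_e1[symmetric] B_e1[symmetric]
    by (simp add: max_absorb1 max_absorb2 algebra_simps)
qed

text \<open>The hypothesis on \<open>\<gamma>\<close> keeps the all-zeros string the MAP estimate of \<open>Y\<^sup>n\<close> at the
  all-zeros output.\<close>
lemma Pc_Y_Z_Zchan:
  assumes "0 \<le> \<alpha>" "\<alpha> \<le> 1" "0 \<le> p" "p \<le> 1" "0 < n" "\<gamma> \<le> 1"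
    and \<gamma>: "\<gamma> * (p * (1 - \<alpha>) ^ n + (1 - p) * \<alpha> ^ n) \<le> (1 - p) * (1 - \<alpha>) ^ n + p * \<alpha> ^ n"
  shows "Pc_Y_Z p \<alpha> n (Zchan n \<gamma>) = 1 - \<gamma> * (p * (1 - \<alpha>) ^ n + (1 - p) * \<alpha> ^ n)"
proof -
  define Q where "Q = PY p \<alpha> n"
  define e0 where "e0 = replicate n False"
  define e1 where "e1 = replicate n True"
  have Q_nonneg: "0 \<le> Q y" for y
    unfolding Q_def PY_def using assms by (intro add_nonneg_nonneg jointP_nonneg) auto
  have Q_e1: "Q e1 = p * (1 - \<alpha>) ^ n + (1 - p) * \<alpha> ^ n"
    and Q_e0: "Q e0 = (1 - p) * (1 - \<alpha>) ^ n + p * \<alpha> ^ n"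
    unfolding Q_def PY_def e0_def e1_def by (simp_all add: jointP_replicate)
  have "e0 \<noteq> e1" unfolding e0_def e1_def using replicate_True_neq_False[OF assms(5)] by simp
  have Max_column: "Max ((\<lambda>y. Q y * Zchan n \<gamma> y z) ` cube n)
      = (if z = e0 then Q e0 else if z = e1 then (1 - \<gamma>) * Q e1 else Q z)" if "z \<in> cube n" for z
  proof (rule Max_eqI)
    show "finite ((\<lambda>y. Q y * Zchan n \<gamma> y z) ` cube n)" by (simp add: finite_cube)
  next
    fix x assume "x \<in> (\<lambda>y. Q y * Zchan n \<gamma> y z) ` cube n"
    then show "x \<le> (if z = e0 then Q e0 else if z = e1 then (1 - \<gamma>) * Q e1 else Q z)"
      using \<gamma> \<open>e0 \<noteq> e1\<close> Q_nonneg[of e1] Q_nonneg[of z] assms(6) unfolding Q_e1[symmetric] Q_e0[symmetric]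
      by (auto simp: Zchan_def e0_def[symmetric] e1_def[symmetric] mult.commute)
  next
    show "(if z = e0 then Q e0 else if z = e1 then (1 - \<gamma>) * Q e1 else Q z)
        \<in> (\<lambda>y. Q y * Zchan n \<gamma> y z) ` cube n"
      using \<open>z \<in> cube n\<close> \<open>e0 \<noteq> e1\<close> replicate_in_cube
      by (auto simp: Zchan_def e0_def[symmetric] e1_def[symmetric] intro: rev_image_eqI)
  qed
  have "Pc_Y_Z p \<alpha> n (Zchan n \<gamma>)
      = (\<Sum>z\<in>cube n. if z = e0 then Q e0 else if z = e1 then (1 - \<gamma>) * Q e1 else Q z)"
    unfolding Pc_Y_Z_def Q_def[symmetric] using Max_column by (intro sum.cong) auto
  also have "\<dots> = Q e0 + (1 - \<gamma>) * Q e1 + (\<Sum>y\<in>cube n - {e0, e1}. Q y)"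
    using \<open>e0 \<noteq> e1\<close> unfolding e0_def e1_def
    by (subst sum_cube_remove_replicates[OF assms(5)]) (auto intro!: sum.cong)
  also have "(\<Sum>y\<in>cube n - {e0, e1}. Q y) = 1 - Q e0 - Q e1"
    using sum_PY[of p \<alpha> n] unfolding Q_def e0_def e1_def
    by (simp add: sum_cube_remove_replicates[OF assms(5)])
  finally show ?thesis unfolding Q_e1[symmetric] by (simp add: algebra_simps)
qed

lemma power_bounds_left_of_root:
  fixes P \<eta> :: real
  assumes "0 < n" "0 < P" "0 < \<eta>"
  shows "\<exists>\<epsilon>L < root n P. \<forall>\<epsilon>. \<epsilon>L \<le> \<epsilon> \<and> \<epsilon> \<le> root n P \<longrightarrow> P - \<eta> \<le> \<epsilon> ^ n \<and> \<epsilon> ^ n \<le> P"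
proof (intro exI conjI allI impI)
  define \<epsilon>L where "\<epsilon>L = root n (max 0 (P - \<eta>))"
  show "\<epsilon>L < root n P" unfolding \<epsilon>L_def using assms by (simp add: real_root_less_iff)
  fix \<epsilon> assume \<epsilon>: "\<epsilon>L \<le> \<epsilon> \<and> \<epsilon> \<le> root n P"
  have "0 \<le> \<epsilon>L" unfolding \<epsilon>L_def using assms by simp
  have "max 0 (P - \<eta>) = \<epsilon>L ^ n" unfolding \<epsilon>L_def using assms by (simp add: real_root_pow_pos2)
  also have "\<dots> \<le> \<epsilon> ^ n" using \<epsilon> \<open>0 \<le> \<epsilon>L\<close> by (intro power_mono) auto
  finally show "P - \<eta> \<le> \<epsilon> ^ n" by simp
  have "\<epsilon> ^ n \<le> root n P ^ n" using \<epsilon> \<open>0 \<le> \<epsilon>L\<close> by (intro power_mono) auto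
  also have "\<dots> = P" using assms by (simp add: real_root_pow_pos2)
  finally show "\<epsilon> ^ n \<le> P" .
qed

lemma weighted_powers_less:
  fixes p \<alpha> :: real
  assumes "0 < \<alpha>" "\<alpha> < 1/2" "1/2 \<le> p" "p \<le> 1" "0 < n" "\<alpha> * p < (1 - \<alpha>) * (1 - p)"
  shows "(1 - p) * \<alpha> ^ n < p * (1 - \<alpha>) ^ n" "p * \<alpha> ^ n < (1 - p) * (1 - \<alpha>) ^ n"
proof -
  have "\<alpha> * (1 - p) \<le> \<alpha> * p" using assms by (intro mult_left_mono) auto
  also have "\<dots> < (1 - \<alpha>) * p" using assms by (intro mult_strict_right_mono) auto
  finally show "(1 - p) * \<alpha> ^ n < p * (1 - \<alpha>) ^ n"
    using assms by (intro mult_power_less) auto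
  show "p * \<alpha> ^ n < (1 - p) * (1 - \<alpha>) ^ n"
    using assms by (intro mult_power_less) auto
qed

lemma zeta_small_left_of_root:
  fixes p \<alpha> :: real
  assumes "0 \<le> \<alpha>" "0 \<le> p" "p \<le> 1" "0 < n" "0 < Pc_theta_Y p \<alpha> n"
    and gaps: "(1 - p) * \<alpha> ^ n < p * (1 - \<alpha>) ^ n" "p * \<alpha> ^ n < (1 - p) * (1 - \<alpha>) ^ n"
  shows "\<exists>\<epsilon>L < root n (Pc_theta_Y p \<alpha> n). \<forall>\<epsilon>. \<epsilon>L \<le> \<epsilon> \<and> \<epsilon> \<le> root n (Pc_theta_Y p \<alpha> n) \<longrightarrow>
    0 \<le> zeta p \<alpha> n \<epsilon> \<and> zeta p \<alpha> n \<epsilon> \<le> 1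
    \<and> zeta p \<alpha> n \<epsilon> * (p * (1 - \<alpha>) ^ n - (1 - p) * \<alpha> ^ n) \<le> (1 - p) * (1 - \<alpha>) ^ n - p * \<alpha> ^ n
    \<and> zeta p \<alpha> n \<epsilon> * (p * (1 - \<alpha>) ^ n + (1 - p) * \<alpha> ^ n) \<le> (1 - p) * (1 - \<alpha>) ^ n + p * \<alpha> ^ n"
proof -
  define c where "c = p * (1 - \<alpha>) ^ n - (1 - p) * \<alpha> ^ n"
  define Q1 where "Q1 = p * (1 - \<alpha>) ^ n + (1 - p) * \<alpha> ^ n"
  define D where "D = (1 - p) * (1 - \<alpha>) ^ n - p * \<alpha> ^ n"
  define Q0 where "Q0 = (1 - p) * (1 - \<alpha>) ^ n + p * \<alpha> ^ n"
  have "c > 0" "D > 0" using gaps unfolding c_def D_def by simp_all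
  have "0 \<le> p * \<alpha> ^ n" "0 \<le> (1 - p) * \<alpha> ^ n" using assms by simp_all
  then have "Q1 > 0" "Q0 > 0" using \<open>c > 0\<close> \<open>D > 0\<close> unfolding c_def Q1_def D_def Q0_def by linarith+
  define \<delta> where "\<delta> = min 1 (min (D / c) (Q0 / Q1))"
  have "\<delta> > 0" unfolding \<delta>_def using \<open>c > 0\<close> \<open>D > 0\<close> \<open>Q0 > 0\<close> \<open>Q1 > 0\<close> by simp
  obtain \<epsilon>L where "\<epsilon>L < root n (Pc_theta_Y p \<alpha> n)" and near_root:
    "\<And>\<epsilon>. \<epsilon>L \<le> \<epsilon> \<and> \<epsilon> \<le> root n (Pc_theta_Y p \<alpha> n)
      \<Longrightarrow> Pc_theta_Y p \<alpha> n - c * \<delta> \<le> \<epsilon> ^ n \<and> \<epsilon> ^ n \<le> Pc_theta_Y p \<alpha> n"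
    using power_bounds_left_of_root[of n "Pc_theta_Y p \<alpha> n" "c * \<delta>"] assms \<open>c > 0\<close> \<open>\<delta> > 0\<close>
    by auto
  show ?thesis
    unfolding c_def[symmetric] D_def[symmetric] Q1_def[symmetric] Q0_def[symmetric]
  proof (intro exI conjI allI impI)
    fix \<epsilon> assume "\<epsilon>L \<le> \<epsilon> \<and> \<epsilon> \<le> root n (Pc_theta_Y p \<alpha> n)"
    then have "Pc_theta_Y p \<alpha> n - c * \<delta> \<le> \<epsilon> ^ n" "\<epsilon> ^ n \<le> Pc_theta_Y p \<alpha> n"
      using near_root by blast+
    then have "0 \<le> zeta p \<alpha> n \<epsilon>" "zeta p \<alpha> n \<epsilon> \<le> \<delta>"
      using \<open>c > 0\<close> unfolding zeta_def c_def[symmetric] by (auto simp: divide_le_eq mult.commute)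
    then show "0 \<le> zeta p \<alpha> n \<epsilon>" "zeta p \<alpha> n \<epsilon> \<le> 1"
      and "zeta p \<alpha> n \<epsilon> * c \<le> D" "zeta p \<alpha> n \<epsilon> * Q1 \<le> Q0"
      using \<open>c > 0\<close> \<open>Q1 > 0\<close> unfolding \<delta>_def by (auto simp: le_divide_eq)
  qed fact
qed

theorem proposition3:
  fixes n :: nat and p \<alpha> :: real
  assumes "odd n"
    and "1/2 \<le> p" "p < 1"
    and "0 < \<alpha>" "\<alpha> < 1/2"
    and "(1 - \<alpha>) * (1 - p) > \<alpha> * p"
    and "p < Pc_theta_Y p \<alpha> n"
  shows "\<exists>\<epsilon>L < root n (Pc_theta_Y p \<alpha> n).
           \<forall>\<epsilon>. \<epsilon>L \<le> \<epsilon> \<and> \<epsilon> \<le> root n (Pc_theta_Y p \<alpha> n) \<longrightarrow>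
             (is_channel n (Zchan n (zeta p \<alpha> n \<epsilon>))
              \<and> Pc_theta_Z p \<alpha> n (Zchan n (zeta p \<alpha> n \<epsilon>)) \<le> \<epsilon> ^ n
              \<and> Pc_Y_Z p \<alpha> n (Zchan n (zeta p \<alpha> n \<epsilon>))
                  = 1 - zeta p \<alpha> n \<epsilon> * (p * (1 - \<alpha>) ^ n + (1 - p) * \<alpha> ^ n))
             \<and> (\<forall>W. is_channel n W \<and> Pc_theta_Z p \<alpha> n W \<le> \<epsilon> ^ n \<longrightarrow>
                  Pc_Y_Z p \<alpha> n W \<le> 1 - zeta p \<alpha> n \<epsilon> * (p * (1 - \<alpha>) ^ n + (1 - p) * \<alpha> ^ n))"
proof -
  have params: "0 \<le> \<alpha>" "\<alpha> \<le> 1/2" "1/2 \<le> p" "p \<le> 1" "0 < n"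
    using assms by (auto intro: odd_pos)
  note gaps = weighted_powers_less[OF assms(4,5,2) params(4,5) assms(6)]
  obtain \<epsilon>L where "\<epsilon>L < root n (Pc_theta_Y p \<alpha> n)" and \<zeta>_small:
    "\<forall>\<epsilon>. \<epsilon>L \<le> \<epsilon> \<and> \<epsilon> \<le> root n (Pc_theta_Y p \<alpha> n) \<longrightarrow>
      0 \<le> zeta p \<alpha> n \<epsilon> \<and> zeta p \<alpha> n \<epsilon> \<le> 1
      \<and> zeta p \<alpha> n \<epsilon> * (p * (1 - \<alpha>) ^ n - (1 - p) * \<alpha> ^ n) \<le> (1 - p) * (1 - \<alpha>) ^ n - p * \<alpha> ^ n
      \<and> zeta p \<alpha> n \<epsilon> * (p * (1 - \<alpha>) ^ n + (1 - p) * \<alpha> ^ n) \<le> (1 - p) * (1 - \<alpha>) ^ n + p * \<alpha> ^ n"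
    using zeta_small_left_of_root[OF params(1) _ params(4,5) _ gaps] params assms(7) by auto
  show ?thesis
  proof (intro exI conjI allI impI)
    fix \<epsilon> assume "\<epsilon>L \<le> \<epsilon> \<and> \<epsilon> \<le> root n (Pc_theta_Y p \<alpha> n)"
    then show "is_channel n (Zchan n (zeta p \<alpha> n \<epsilon>))"
      and "Pc_theta_Z p \<alpha> n (Zchan n (zeta p \<alpha> n \<epsilon>)) \<le> \<epsilon> ^ n"
      and "Pc_Y_Z p \<alpha> n (Zchan n (zeta p \<alpha> n \<epsilon>))
        = 1 - zeta p \<alpha> n \<epsilon> * (p * (1 - \<alpha>) ^ n + (1 - p) * \<alpha> ^ n)"
      using \<zeta>_small is_channel_Zchan Pc_theta_Z_Zchan[OF params] Pc_Y_Z_Zchan params gaps(1)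
      by (auto simp: zeta_def)
  next
    fix \<epsilon> W assume "is_channel n W \<and> Pc_theta_Z p \<alpha> n W \<le> \<epsilon> ^ n"
    then show "Pc_Y_Z p \<alpha> n W \<le> 1 - zeta p \<alpha> n \<epsilon> * (p * (1 - \<alpha>) ^ n + (1 - p) * \<alpha> ^ n)"
      using Pc_Y_Z_le_if_Pc_theta_Z_le[OF params(1-4) gaps(1)] by auto
  qed fact
qed

end
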